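(* Let $0\leq \alpha < 1$ and let $G$ be a connected graph with $n$ vertices and $m$ edges. Let $1\leq k\leq n$ and let $U=\{u_1,\ldots,u_{k-1}\}\subseteq V(G)$ be any set of $k-1$ vertices (empty if $k=1$). Then $$S_{k}(A_{\alpha}(G)) \geq \left(\alpha-\frac{1}{n-k+1}\right)\sum_{u\in U}d_u+\frac{2m-(1-\alpha)|\partial(U, V(G)\setminus U)|}{n-k+1}.$$
   Context: All graphs are simple and undirected. $d_u$ is the degree of vertex $u$. $A_{\alpha}(G)=\alpha D(G)+(1-\alpha)A(G)$, where $A(G)$ is the adjacency matrix and $D(G)$ the diagonal degree matrix. For a real symmetric matrix $M$ with eigenvalues $\lambda_1(M)\geq\cdots\geq\lambda_n(M)$, $S_k(M)=\sum_{i=1}^k\lambda_i(M)$. For $U,W\subseteq V(G)$, $\partial(U,W)$ is the set of edges joining a vertex of $U$ with a vertex of $W$. *)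

theory Defs
  imports "Jordan_Normal_Form.Char_Poly" "HOL-Library.Multiset"
begin

definition simple_graph :: "nat \<Rightarrow> (nat \<Rightarrow> nat \<Rightarrow> bool) \<Rightarrow> bool" where
  "simple_graph n E \<longleftrightarrow> (\<forall>u v. E u v \<longrightarrow> E v u) \<and> (\<forall>u. \<not> E u u)
      \<and> (\<forall>u v. E u v \<longrightarrow> u < n \<and> v < n)"

definition connected_graph :: "nat \<Rightarrow> (nat \<Rightarrow> nat \<Rightarrow> bool) \<Rightarrow> bool" where
  "connected_graph n E \<longleftrightarrow> (\<forall>u<n. \<forall>v<n. E\<^sup>*\<^sup>* u v)"

definition edges :: "nat \<Rightarrow> (nat \<Rightarrow> nat \<Rightarrow> bool) \<Rightarrow> nat set set" where
  "edges n E = {{u, v} | u v. u < n \<and> v < n \<and> E u v}"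

definition degree :: "nat \<Rightarrow> (nat \<Rightarrow> nat \<Rightarrow> bool) \<Rightarrow> nat \<Rightarrow> nat" where
  "degree n E u = card {v. v < n \<and> E u v}"

definition boundary :: "nat \<Rightarrow> (nat \<Rightarrow> nat \<Rightarrow> bool) \<Rightarrow> nat set \<Rightarrow> nat set \<Rightarrow> nat set set" where
  "boundary n E U W = {{u, w} | u w. u \<in> U \<and> w \<in> W \<and> u < n \<and> w < n \<and> E u w}"

definition adj_mat :: "nat \<Rightarrow> (nat \<Rightarrow> nat \<Rightarrow> bool) \<Rightarrow> real mat" where
  "adj_mat n E = mat n n (\<lambda>(i, j). if E i j then 1 else 0)"

definition deg_mat :: "nat \<Rightarrow> (nat \<Rightarrow> nat \<Rightarrow> bool) \<Rightarrow> real mat" where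
  "deg_mat n E = mat n n (\<lambda>(i, j). if i = j then real (degree n E i) else 0)"

definition A_alpha :: "real \<Rightarrow> nat \<Rightarrow> (nat \<Rightarrow> nat \<Rightarrow> bool) \<Rightarrow> real mat" where
  "A_alpha \<alpha> n E = \<alpha> \<cdot>\<^sub>m deg_mat n E + (1 - \<alpha>) \<cdot>\<^sub>m adj_mat n E"

text \<open>Eigenvalues with multiplicity (roots of the characteristic polynomial),
listed in nonincreasing order. For real symmetric matrices all roots are real.\<close>
definition eigenvalues_desc :: "real mat \<Rightarrow> real list" where
  "eigenvalues_desc M = rev (sorted_list_of_multiset (proots (char_poly M)))"

definition S_k :: "nat \<Rightarrow> real mat \<Rightarrow> real" where
  "S_k k M = sum_list (take k (eigenvalues_desc M))"

end

(* Ky Fan's principle: for a real symmetric matrix M and orthonormal vectors x_1, ..., x_k, the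
   sum of the k largest eigenvalues of M is at least the sum of the x_j^T M x_j.  It follows from
   the spectral theorem (obtained by Householder deflation) and Bessel's inequality: the weights
   that the x_j put on the eigenvectors lie in [0,1] and add up to k, so they are best placed on
   the k largest eigenvalues.
   For A_alpha(G) take the unit vectors of the k-1 vertices of U and the normalised indicator
   vector of W = V(G) - U, where |W| = n-k+1.  The former contribute alpha d_u each, the latter
   (sum_{w in W} d_w - (1-alpha) |boundary(U,W)|) / |W|, and the handshake lemma
   sum_{w in W} d_w = 2m - sum_{u in U} d_u turns the sum into the stated bound. *)

theory Submission
  imports Defs "HOL-Computational_Algebra.Fundamental_Theorem_Algebra"
begin

section \<open>Spectral theorem for real symmetric matrices\<close>

text \<open>A real symmetric matrix cannot act on a nonzero pair of vectors (a, b) as a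
  rotation-dilation with nonzero rotation part.\<close>
lemma symmetric_mat_rotation_pair:
  fixes A :: "real mat"
  assumes sym: "\<And>i j. i < n \<Longrightarrow> j < n \<Longrightarrow> A $$ (i,j) = A $$ (j,i)"
    and Aa: "\<And>i. i < n \<Longrightarrow> (\<Sum>j<n. A $$ (i,j) * a j) = x * a i - y * b i"
    and Ab: "\<And>i. i < n \<Longrightarrow> (\<Sum>j<n. A $$ (i,j) * b j) = x * b i + y * a i"
  shows "y * (\<Sum>i<n. a i ^ 2 + b i ^ 2) = 0"
proof -
  have "(\<Sum>i<n. \<Sum>j<n. b i * A $$ (i,j) * a j) = (\<Sum>i<n. \<Sum>j<n. a j * A $$ (j,i) * b i)"
    using sym by (intro sum.cong refl) (simp add: mult_ac)
  then have "(\<Sum>i<n. b i * (\<Sum>j<n. A $$ (i,j) * a j)) = (\<Sum>j<n. a j * (\<Sum>i<n. A $$ (j,i) * b i))"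
    by (simp add: sum_distrib_left mult.assoc) (rule sum.swap)
  then have "(\<Sum>i<n. b i * (x * a i - y * b i)) = (\<Sum>j<n. a j * (x * b j + y * a j))"
    using Aa Ab by simp
  then show ?thesis
    by (simp add: sum_subtractf sum.distrib sum_distrib_left algebra_simps power2_eq_square)
qed

lemma symmetric_real_mat_has_eigenvector:
  fixes A :: "real mat"
  assumes A: "A \<in> carrier_mat n n" and sym: "transpose_mat A = A" and n: "n > 0"
  shows "\<exists>e v. eigenvector A v e"
proof -
  define Ac where "Ac = map_mat complex_of_real A"
  have Ac: "Ac \<in> carrier_mat n n" using A unfolding Ac_def by auto
  have "\<not> constant (poly (char_poly Ac))"
    using degree_monic_char_poly[OF Ac] n by (simp add: constant_degree)
  then obtain z where "poly (char_poly Ac) z = 0" using fundamental_theorem_of_algebra by blast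
  then obtain w where "eigenvector Ac w z"
    using eigenvalue_root_char_poly[OF Ac] unfolding eigenvalue_def by blast
  then have w: "w \<in> carrier_vec n" "w \<noteq> 0\<^sub>v n" and "Ac *\<^sub>v w = z \<cdot>\<^sub>v w"
    using Ac unfolding eigenvector_def by auto
  define a where "a i = Re (w $ i)" for i
  define b where "b i = Im (w $ i)" for i
  have eq: "(\<Sum>j<n. complex_of_real (A $$ (i,j)) * w $ j) = z * w $ i" if "i < n" for i
    using arg_cong[OF \<open>Ac *\<^sub>v w = z \<cdot>\<^sub>v w\<close>, of "\<lambda>v. v $ i"] that Ac w A
    by (simp add: Ac_def scalar_prod_def lessThan_atLeast0 mult.commute)
  have eqa: "(\<Sum>j<n. A $$ (i,j) * a j) = Re z * a i - Im z * b i" if "i < n" for i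
    using arg_cong[OF eq[OF that], of Re] by (simp add: a_def b_def Re_sum)
  have eqb: "(\<Sum>j<n. A $$ (i,j) * b j) = Re z * b i + Im z * a i" if "i < n" for i
    using arg_cong[OF eq[OF that], of Im] by (simp add: a_def b_def Im_sum algebra_simps)
  have "A $$ (i,j) = A $$ (j,i)" if "i < n" "j < n" for i j
    using that A arg_cong[OF sym, of "\<lambda>M. M $$ (j,i)"] by auto
  from symmetric_mat_rotation_pair[OF this eqa eqb]
  have "Im z * (\<Sum>i<n. a i ^ 2 + b i ^ 2) = 0" .
  moreover obtain i where i: "i < n" "w $ i \<noteq> 0"
    using w by (metis carrier_vecD eq_vecI index_zero_vec(1,2))
  moreover have "(\<Sum>i<n. a i ^ 2 + b i ^ 2) > 0"
  proof (rule sum_pos2)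
    show "0 < a i ^ 2 + b i ^ 2"
      using i unfolding a_def b_def by (metis complex.expand sum_power2_gt_zero_iff zero_complex.sel)
  qed (use i in auto)
  ultimately have "Im z = 0" by simp
  then have "eigenvector A (vec n a) (Re z)" if "a i \<noteq> 0"
    using eqa A i that
    by (auto simp: eigenvector_def scalar_prod_def lessThan_atLeast0 mult.commute
        intro!: eq_vecI dest: arg_cong[of _ _ "\<lambda>v. v $ i"])
  moreover have "eigenvector A (vec n b) (Re z)" if "b i \<noteq> 0"
    using \<open>Im z = 0\<close> eqb A i that
    by (auto simp: eigenvector_def scalar_prod_def lessThan_atLeast0 mult.commute
        intro!: eq_vecI dest: arg_cong[of _ _ "\<lambda>v. v $ i"])
  moreover have "a i \<noteq> 0 \<or> b i \<noteq> 0"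
    using i unfolding a_def b_def by (simp add: complex_eq_iff)
  ultimately show ?thesis by blast
qed

text \<open>The reflection I - 2 u u^T / |u|^2; for u = 0 the junk value 2 / 0 = 0 makes it the identity.\<close>
definition householder_mat :: "nat \<Rightarrow> (nat \<Rightarrow> real) \<Rightarrow> real mat" where
  "householder_mat n u =
     mat n n (\<lambda>(i,j). (if i = j then 1 else 0) - 2 / (\<Sum>k<n. u k ^ 2) * u i * u j)"

lemma householder_mat_carrier [simp]: "householder_mat n u \<in> carrier_mat n n"
  unfolding householder_mat_def by simp

lemma transpose_householder_mat: "transpose_mat (householder_mat n u) = householder_mat n u"
  unfolding householder_mat_def by (rule eq_matI) auto

lemma householder_mat_involutive: "householder_mat n u * householder_mat n u = 1\<^sub>m n"
proof (rule eq_matI)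
  fix i j assume "i < dim_row (1\<^sub>m n :: real mat)" "j < dim_col (1\<^sub>m n :: real mat)"
  then have i: "i < n" and j: "j < n" by auto
  define c where "c = (\<Sum>k<n. u k ^ 2)"
  define t where "t = 2 / c"
  have tc: "t * t * c = 2 * t" unfolding t_def by (cases "c = 0") (auto simp: power2_eq_square)
  have dl: "(\<Sum>k<n. (if i = k then 1 else 0) * g k) = g i" for g :: "nat \<Rightarrow> real"
    using i by (simp add: if_distrib[of "\<lambda>x. x * _"] cong: if_cong)
  have dr: "(\<Sum>k<n. (if k = j then 1 else 0) * g k) = g j" for g :: "nat \<Rightarrow> real"
    using j by (simp add: if_distrib[of "\<lambda>x. x * _"] cong: if_cong)
  have "(householder_mat n u * householder_mat n u) $$ (i,j)
      = (\<Sum>k<n. ((if i = k then 1 else 0) - t * u i * u k) * ((if k = j then 1 else 0) - t * u k * u j))"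
    using i j by (simp add: householder_mat_def t_def c_def scalar_prod_def lessThan_atLeast0)
  also have "\<dots> = (\<Sum>k<n. (if i = k then 1 else 0) * (if k = j then 1 else 0))
       - (\<Sum>k<n. (if i = k then 1 else 0) * (t * u k * u j))
       - (\<Sum>k<n. (if k = j then 1 else 0) * (t * u i * u k)) + t * t * u i * u j * c"
    by (simp add: c_def algebra_simps sum_subtractf sum.distrib sum_distrib_left power2_eq_square)
  also have "\<dots> = (if i = j then 1 else 0) + (t * t * c - 2 * t) * u i * u j"
    by (simp only: dl dr) (simp add: algebra_simps)
  also have "\<dots> = 1\<^sub>m n $$ (i,j)" using i j tc by simp
  finally show "(householder_mat n u * householder_mat n u) $$ (i,j) = 1\<^sub>m n $$ (i,j)" .
qed (auto simp: householder_mat_def)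

text \<open>The reflection in the hyperplane orthogonal to v - e swaps the unit vectors v and e,
  where e is the first standard basis vector.\<close>
lemma householder_mat_col_0:
  assumes "i < n" and unit: "(\<Sum>k<n. v k ^ 2) = 1"
  shows "householder_mat n (\<lambda>k. v k - (if k = 0 then 1 else 0)) $$ (i,0) = v i"
proof -
  define u where "u k = v k - (if k = 0 then 1 else 0)" for k
  define c where "c = (\<Sum>k<n. u k ^ 2)"
  have "u k ^ 2 = v k ^ 2 - 2 * (if k = 0 then v k else 0) + (if k = 0 then 1 else 0)" for k
    unfolding u_def by (simp add: power2_diff)
  then have "c = (\<Sum>k<n. v k ^ 2) - 2 * (\<Sum>k<n. if k = 0 then v k else 0) + (\<Sum>k<n. if k = 0 then 1 else 0)"
    unfolding c_def by (simp add: sum_subtractf sum.distrib flip: sum_distrib_left)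
  then have c: "c = 2 - 2 * v 0" using unit \<open>i < n\<close> by simp
  have "householder_mat n u $$ (i,0) = (if i = 0 then 1 else 0) - 2 / c * u i * u 0"
    using \<open>i < n\<close> by (simp add: householder_mat_def c_def)
  also have "\<dots> = v i"
  proof (cases "c = 0")
    case True
    then have "u i = 0"
      using \<open>i < n\<close> sum_nonneg_eq_0_iff[of "{..<n}" "\<lambda>k. u k ^ 2"] by (simp add: c_def)
    with True show ?thesis by (simp add: u_def split: if_splits)
  next
    case False
    then have "2 / c * u 0 = -1" using c by (simp add: u_def field_simps)
    then have "2 / c * u i * u 0 = - u i" by (metis mult.assoc mult.commute mult_minus1_right)
    then show ?thesis by (simp add: u_def)
  qed
  finally show ?thesis unfolding u_def .
qed

lemma householder_deflation:
  fixes A :: "real mat"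
  assumes A: "A \<in> carrier_mat (Suc m) (Suc m)" and symA: "transpose_mat A = A"
    and ev: "eigenvector A w e"
  obtains H A3 where "H \<in> carrier_mat (Suc m) (Suc m)" "transpose_mat H = H" "H * H = 1\<^sub>m (Suc m)"
    "A3 \<in> carrier_mat m m" "transpose_mat A3 = A3"
    "H * A * H = four_block_mat (mat 1 1 (\<lambda>_. e)) (0\<^sub>m 1 m) (0\<^sub>m m 1) A3"
proof -
  define n where "n = Suc m"
  have A: "A \<in> carrier_mat n n" using A n_def by simp
  have w: "w \<in> carrier_vec n" "w \<noteq> 0\<^sub>v n" and Aw: "A *\<^sub>v w = e \<cdot>\<^sub>v w"
    using ev A unfolding eigenvector_def by auto
  define s where "s = sqrt (\<Sum>k<n. (w $ k) ^ 2)"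
  have w_sq: "(\<Sum>k<n. (w $ k) ^ 2) > 0"
  proof -
    obtain i where "i < n" "w $ i \<noteq> 0" using w by (metis carrier_vecD eq_vecI index_zero_vec(1,2))
    then show ?thesis by (intro sum_pos2[of _ i]) auto
  qed
  then have s2: "s ^ 2 = (\<Sum>k<n. (w $ k) ^ 2)" and "s > 0" unfolding s_def by auto
  define v where "v = (1 / s) \<cdot>\<^sub>v w"
  have v: "v \<in> carrier_vec n" using w unfolding v_def by simp
  have unit: "(\<Sum>k<n. (v $ k) ^ 2) = 1"
    using w s2 w_sq by (simp add: v_def power_divide flip: sum_divide_distrib)
  have Av: "A *\<^sub>v v = e \<cdot>\<^sub>v v"
    using A w by (simp add: v_def mult_mat_vec Aw smult_smult_assoc mult.commute)
  define H where "H = householder_mat n (\<lambda>k. v $ k - (if k = 0 then 1 else 0))"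
  have H: "H \<in> carrier_mat n n" and HT: "transpose_mat H = H" and HH: "H * H = 1\<^sub>m n"
    unfolding H_def by (simp_all add: transpose_householder_mat householder_mat_involutive)
  have "H $$ (i,0) = v $ i" if "i < n" for i
    using householder_mat_col_0[OF that unit] by (simp add: H_def)
  then have colH: "col H 0 = v"
    using H v by (intro eq_vecI) (auto simp: n_def)
  define A' where "A' = H * A * H"
  have A': "A' \<in> carrier_mat n n" using A H unfolding A'_def by simp
  have symA': "transpose_mat A' = A'"
    using A H HT symA by (simp add: A'_def transpose_mult[of _ n n _ n] assoc_mult_mat[of _ n n _ n _ n])
  \<comment> \<open>H swaps v and the first basis vector, so H A H maps the latter to e times itself.\<close>
  have "col A' 0 = (H * A) *\<^sub>v col H 0"
    unfolding A'_def by (rule col_mult2) (use A H in \<open>auto simp: n_def\<close>)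
  also have "\<dots> = e \<cdot>\<^sub>v (H *\<^sub>v col H 0)"
    using A H v by (simp add: colH Av mult_mat_vec)
  also have "\<dots> = e \<cdot>\<^sub>v col (H * H) 0"
    using col_mult2[OF H H, of 0] by (simp add: n_def)
  finally have col0: "col A' 0 = e \<cdot>\<^sub>v unit_vec n 0" using HH by (simp add: n_def)
  have A'_col0: "A' $$ (i,0) = (if i = 0 then e else 0)" if "i < n" for i
    using arg_cong[OF col0, of "\<lambda>x. x $ i"] that A' by (auto simp: n_def)
  have A'_swap: "A' $$ (i,j) = A' $$ (j,i)" if "i < n" "j < n" for i j
    using arg_cong[OF symA', of "\<lambda>M. M $$ (j,i)"] that A' by simp
  have A'_row0: "A' $$ (0,j) = (if j = 0 then e else 0)" if "j < n" for j
    using A'_col0[OF that] A'_swap[OF _ that] by (simp add: n_def)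
  define A3 where "A3 = mat m m (\<lambda>(i,j). A' $$ (Suc i, Suc j))"
  have "transpose_mat A3 = A3"
    using A'_swap by (intro eq_matI) (auto simp: A3_def n_def)
  moreover have "H * A * H = four_block_mat (mat 1 1 (\<lambda>_. e)) (0\<^sub>m 1 m) (0\<^sub>m m 1) A3"
    using A' A'_col0 A'_row0
    by (intro eq_matI) (auto simp: A'_def[symmetric] A3_def n_def)
  moreover have "A3 \<in> carrier_mat m m" by (simp add: A3_def)
  ultimately show ?thesis using that H HT HH unfolding n_def by blast
qed

lemma mat_diag_Suc_four_block:
  "mat_diag (Suc m) (case_nat e f) = four_block_mat (mat 1 1 (\<lambda>_. e)) (0\<^sub>m 1 m) (0\<^sub>m m 1) (mat_diag m f)"
  by (rule eq_matI) (auto simp: mat_diag_def split: nat.splits)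

lemma orthogonal_diagonalizer_four_block:
  fixes Q :: "real mat"
  assumes Q: "Q \<in> carrier_mat m m" "transpose_mat Q * Q = 1\<^sub>m m" "A3 * Q = Q * mat_diag m f"
    and A3: "A3 \<in> carrier_mat m m"
  defines "B \<equiv> four_block_mat (1\<^sub>m 1) (0\<^sub>m 1 m) (0\<^sub>m m 1) Q"
  shows "B \<in> carrier_mat (Suc m) (Suc m)" "transpose_mat B * B = 1\<^sub>m (Suc m)"
    "four_block_mat (mat 1 1 (\<lambda>_. e)) (0\<^sub>m 1 m) (0\<^sub>m m 1) A3 * B = B * mat_diag (Suc m) (case_nat e f)"
proof -
  show "B \<in> carrier_mat (Suc m) (Suc m)"
    using four_block_carrier_mat[OF one_carrier_mat[of 1] Q(1)] by (simp add: B_def)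
  have BT: "transpose_mat B = four_block_mat (1\<^sub>m 1) (0\<^sub>m 1 m) (0\<^sub>m m 1) (transpose_mat Q)"
    unfolding B_def using Q by (subst transpose_four_block_mat[of _ 1 1 _ m _ m]) auto
  have "transpose_mat B * B = four_block_mat (1\<^sub>m 1) (0\<^sub>m 1 m) (0\<^sub>m m 1) (transpose_mat Q * Q)"
    unfolding BT unfolding B_def using Q by (subst mult_four_block_mat[of _ 1 1 _ m _ m]) auto
  then show "transpose_mat B * B = 1\<^sub>m (Suc m)" using Q by simp
  have "four_block_mat (mat 1 1 (\<lambda>_. e)) (0\<^sub>m 1 m) (0\<^sub>m m 1) A3 * B
      = four_block_mat (mat 1 1 (\<lambda>_. e)) (0\<^sub>m 1 m) (0\<^sub>m m 1) (A3 * Q)"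
    unfolding B_def using Q A3 by (subst mult_four_block_mat[of _ 1 1 _ m _ m]) auto
  also have "\<dots> = B * mat_diag (Suc m) (case_nat e f)"
    unfolding B_def mat_diag_Suc_four_block Q(3)
    using Q left_mult_zero_mat[OF mat_diag_dim[of m f], of 1]
    by (subst mult_four_block_mat[of _ 1 1 _ m _ m]) auto
  finally show "four_block_mat (mat 1 1 (\<lambda>_. e)) (0\<^sub>m 1 m) (0\<^sub>m m 1) A3 * B
      = B * mat_diag (Suc m) (case_nat e f)" .
qed

lemma symmetric_real_mat_orthogonally_diagonalizable:
  fixes A :: "real mat"
  assumes "A \<in> carrier_mat n n" and "transpose_mat A = A"
  shows "\<exists>P f. P \<in> carrier_mat n n \<and> transpose_mat P * P = 1\<^sub>m n \<and> A * P = P * mat_diag n f"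
  using assms
proof (induction n arbitrary: A)
  case 0
  then have "A * 1\<^sub>m 0 = 1\<^sub>m 0 * mat_diag 0 f" for f by (intro eq_matI) (auto simp: mat_diag_def)
  moreover have "transpose_mat (1\<^sub>m 0) * 1\<^sub>m 0 = (1\<^sub>m 0 :: real mat)" by simp
  ultimately show ?case using one_carrier_mat by blast
next
  case (Suc m)
  obtain w e where "eigenvector A w e"
    using symmetric_real_mat_has_eigenvector[OF Suc.prems] by auto
  then obtain H A3 where H: "H \<in> carrier_mat (Suc m) (Suc m)" "transpose_mat H = H" "H * H = 1\<^sub>m (Suc m)"
    and A3: "A3 \<in> carrier_mat m m" "transpose_mat A3 = A3"
    and HAH: "H * A * H = four_block_mat (mat 1 1 (\<lambda>_. e)) (0\<^sub>m 1 m) (0\<^sub>m m 1) A3"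
    using householder_deflation[OF Suc.prems] by metis
  obtain Q f where Q: "Q \<in> carrier_mat m m" "transpose_mat Q * Q = 1\<^sub>m m" "A3 * Q = Q * mat_diag m f"
    using Suc.IH[OF A3] by blast
  define B where "B = four_block_mat (1\<^sub>m 1) (0\<^sub>m 1 m) (0\<^sub>m m 1) Q"
  define D where "D = mat_diag (Suc m) (case_nat e f)"
  have B: "B \<in> carrier_mat (Suc m) (Suc m)" and BB: "transpose_mat B * B = 1\<^sub>m (Suc m)"
    and HAHB: "H * A * H * B = B * D"
    using orthogonal_diagonalizer_four_block[OF Q A3(1)] by (simp_all add: B_def D_def HAH)
  have D: "D \<in> carrier_mat (Suc m) (Suc m)" by (simp add: D_def)
  have HHX: "H * (H * X) = X" if "X \<in> carrier_mat (Suc m) (Suc m)" for X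
    using H that by (simp flip: assoc_mult_mat[of _ "Suc m" "Suc m" _ "Suc m" _ "Suc m"])
  note assoc = assoc_mult_mat[of _ "Suc m" "Suc m" _ "Suc m" _ "Suc m"]
  define P where "P = H * B"
  have P: "P \<in> carrier_mat (Suc m) (Suc m)" using H B by (simp add: P_def)
  have "transpose_mat P * P = transpose_mat B * (H * (H * B))"
    using H B by (simp add: P_def transpose_mult[OF H(1) B] assoc)
  then have PP: "transpose_mat P * P = 1\<^sub>m (Suc m)" using B BB by (simp add: HHX)
  have "A * P = H * (H * (A * (H * B)))"
    using H B Suc.prems by (simp add: P_def HHX)
  also have "\<dots> = H * (H * A * H * B)"
    using H B Suc.prems by (simp add: assoc)
  also have "\<dots> = P * D"
    using H B D by (simp add: HAHB P_def assoc)
  finally show ?case using P PP unfolding D_def by blast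
qed

lemma proots_prod_linear_factors: "proots (\<Prod>a\<leftarrow>xs. [:- a, 1:]) = mset (xs :: 'a :: idom list)"
proof -
  have "0 \<notin> set (map (\<lambda>a. [:- a, 1:]) xs)" by auto
  then show ?thesis using proots_prod_list[of "map (\<lambda>a. [:- a, 1:]) xs"] by (simp add: comp_def)
qed

lemma proots_char_poly_mat_diag: "proots (char_poly (mat_diag n f)) = mset (map f [0..<n])"
proof -
  have ut: "upper_triangular (mat_diag n f)" by (simp add: upper_triangular_def mat_diag_def)
  have diag: "diag_mat (mat_diag n f) = map f [0..<n]"
    by (rule nth_equalityI) (auto simp: diag_mat_def mat_diag_def)
  have "proots (char_poly (mat_diag n f)) = proots (\<Prod>a\<leftarrow>map f [0..<n]. [:- a, 1:])"
    by (simp only: char_poly_upper_triangular[OF mat_diag_dim ut] diag)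
  also have "\<dots> = mset (map f [0..<n])"
    by (rule proots_prod_linear_factors)
  finally show ?thesis .
qed

lemma symmetric_real_mat_spectral_decomposition:
  fixes A :: "real mat"
  assumes A: "A \<in> carrier_mat n n" and sym: "transpose_mat A = A"
  obtains P f where
    "\<And>i j. i < n \<Longrightarrow> j < n \<Longrightarrow> (\<Sum>a<n. P $$ (a,i) * P $$ (a,j)) = (if i = j then 1 else 0)"
    "\<And>a b. a < n \<Longrightarrow> b < n \<Longrightarrow> (\<Sum>i<n. P $$ (a,i) * P $$ (b,i)) = (if a = b then 1 else 0)"
    "\<And>a b. a < n \<Longrightarrow> b < n \<Longrightarrow> A $$ (a,b) = (\<Sum>i<n. f i * P $$ (a,i) * P $$ (b,i))"
    "eigenvalues_desc A = rev (sort (map f [0..<n]))"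
proof -
  obtain P f where P: "P \<in> carrier_mat n n" and PtP: "transpose_mat P * P = 1\<^sub>m n"
    and AP: "A * P = P * mat_diag n f"
    using symmetric_real_mat_orthogonally_diagonalizable[OF A sym] by blast
  have Pt: "transpose_mat P \<in> carrier_mat n n" using P by simp
  have PPt: "P * transpose_mat P = 1\<^sub>m n" by (rule mat_mult_left_right_inverse[OF Pt P PtP])
  have "A = A * (P * transpose_mat P)" using PPt A by simp
  also have "\<dots> = P * mat_diag n f * transpose_mat P"
    using A P Pt by (simp add: AP flip: assoc_mult_mat[of _ n n _ n _ n])
  finally have A_eq: "A = P * mat_diag n f * transpose_mat P" .
  have "similar_mat A (mat_diag n f)"
    unfolding similar_mat_def using similar_mat_witI[OF PPt PtP A_eq A mat_diag_dim P Pt] by blast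
  then have "eigenvalues_desc A = rev (sort (map f [0..<n]))"
    unfolding eigenvalues_desc_def char_poly_similar[OF \<open>similar_mat A _\<close>] proots_char_poly_mat_diag
    by (simp only: sorted_list_of_multiset_mset)
  moreover have "(\<Sum>a<n. P $$ (a,i) * P $$ (a,j)) = (if i = j then 1 else 0)" if "i < n" "j < n" for i j
    using arg_cong[OF PtP, of "\<lambda>M. M $$ (i,j)"] that P
    by (simp add: scalar_prod_def lessThan_atLeast0)
  moreover have "(\<Sum>i<n. P $$ (a,i) * P $$ (b,i)) = (if a = b then 1 else 0)" if "a < n" "b < n" for a b
    using arg_cong[OF PPt, of "\<lambda>M. M $$ (a,b)"] that P
    by (simp add: scalar_prod_def lessThan_atLeast0)
  moreover have "A $$ (a,b) = (\<Sum>i<n. f i * P $$ (a,i) * P $$ (b,i))" if "a < n" "b < n" for a b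
    using arg_cong[OF A_eq, of "\<lambda>M. M $$ (a,b)"] that P
    by (simp add: mat_diag_mult_right[OF P] scalar_prod_def lessThan_atLeast0 mult_ac)
  ultimately show ?thesis using that by blast
qed

section \<open>Ky Fan's inequality\<close>

lemma sum_weighted_squares_expand:
  fixes w :: "'k \<Rightarrow> real"
  shows "(\<Sum>k\<in>K. w k * (\<Sum>a\<in>A. c k a * v a)\<^sup>2)
    = (\<Sum>a\<in>A. \<Sum>b\<in>A. v a * v b * (\<Sum>k\<in>K. w k * c k a * c k b))"
proof -
  have "(\<Sum>k\<in>K. w k * (\<Sum>a\<in>A. c k a * v a)\<^sup>2) = (\<Sum>k\<in>K. \<Sum>a\<in>A. \<Sum>b\<in>A. v a * v b * (w k * c k a * c k b))"
    by (simp add: power2_eq_square sum_product sum_distrib_left mult_ac)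
  also have "\<dots> = (\<Sum>a\<in>A. \<Sum>k\<in>K. \<Sum>b\<in>A. v a * v b * (w k * c k a * c k b))"
    by (rule sum.swap)
  also have "\<dots> = (\<Sum>a\<in>A. \<Sum>b\<in>A. \<Sum>k\<in>K. v a * v b * (w k * c k a * c k b))"
    by (rule sum.cong[OF refl], rule sum.swap)
  finally show ?thesis by (simp add: sum_distrib_left)
qed

lemma sum_delta_square:
  "finite A \<Longrightarrow> (\<Sum>a\<in>A. \<Sum>b\<in>A. v a * v b * (if a = b then 1 else 0)) = (\<Sum>a\<in>A. (v a)\<^sup>2 :: real)"
  by (simp add: power2_eq_square if_distrib[of "\<lambda>x. _ * x"] cong: if_cong)

lemma bessel_inequality:
  fixes x :: "'j \<Rightarrow> nat \<Rightarrow> real"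
  assumes "finite J"
    and orthonormal: "\<And>j l. j \<in> J \<Longrightarrow> l \<in> J \<Longrightarrow> (\<Sum>a<n. x j a * x l a) = (if j = l then 1 else 0)"
  shows "(\<Sum>j\<in>J. (\<Sum>a<n. p a * x j a)\<^sup>2) \<le> (\<Sum>a<n. (p a)\<^sup>2)"
proof -
  define y where "y j = (\<Sum>a<n. p a * x j a)" for j
  define q where "q a = (\<Sum>j\<in>J. y j * x j a)" for a
  have "(\<Sum>a<n. p a * q a) = (\<Sum>j\<in>J. y j * (\<Sum>a<n. p a * x j a))"
    unfolding q_def by (simp add: sum_distrib_left mult_ac) (rule sum.swap)
  then have cross: "(\<Sum>a<n. p a * q a) = (\<Sum>j\<in>J. (y j)\<^sup>2)"
    by (simp add: y_def power2_eq_square)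
  have "(\<Sum>a<n. (q a)\<^sup>2) = (\<Sum>j\<in>J. \<Sum>l\<in>J. y j * y l * (\<Sum>a<n. x j a * x l a))"
    using sum_weighted_squares_expand[where w="\<lambda>_. 1" and K="{..<n}" and c="\<lambda>a j. x j a" and A=J and v=y]
    by (simp add: q_def mult.commute)
  also have "\<dots> = (\<Sum>j\<in>J. (y j)\<^sup>2)"
    using \<open>finite J\<close> by (simp add: orthonormal sum_delta_square cong: sum.cong)
  finally have quad: "(\<Sum>a<n. (q a)\<^sup>2) = (\<Sum>j\<in>J. (y j)\<^sup>2)" .
  have "0 \<le> (\<Sum>a<n. (p a - q a)\<^sup>2)" by (simp add: sum_nonneg)
  also have "\<dots> = (\<Sum>a<n. (p a)\<^sup>2) - 2 * (\<Sum>a<n. p a * q a) + (\<Sum>a<n. (q a)\<^sup>2)"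
    by (simp add: power2_diff sum.distrib sum_subtractf sum_distrib_left mult.assoc)
  finally show ?thesis by (simp add: cross quad y_def)
qed

lemma sum_square_orthogonal_coordinates:
  assumes rows: "\<And>a b. a < n \<Longrightarrow> b < n \<Longrightarrow> (\<Sum>i<n. P $$ (a,i) * P $$ (b,i)) = (if a = b then 1 else 0)"
  shows "(\<Sum>i<n. (\<Sum>a<n. P $$ (a,i) * v a)\<^sup>2) = (\<Sum>a<n. (v a)\<^sup>2 :: real)"
proof -
  have "(\<Sum>i<n. (\<Sum>a<n. P $$ (a,i) * v a)\<^sup>2) = (\<Sum>a<n. \<Sum>b<n. v a * v b * (\<Sum>i<n. P $$ (a,i) * P $$ (b,i)))"
    using sum_weighted_squares_expand[where w="\<lambda>_. 1" and K="{..<n}" and c="\<lambda>i a. P $$ (a,i)" and A="{..<n}"] by simp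
  also have "\<dots> = (\<Sum>a<n. \<Sum>b<n. v a * v b * (if a = b then 1 else 0))"
    by (intro sum.cong refl) (simp add: rows)
  also have "\<dots> = (\<Sum>a<n. (v a)\<^sup>2)"
    by (rule sum_delta_square) simp
  finally show ?thesis .
qed

lemma weighted_sum_le_sum_take:
  fixes L :: "real list" and c :: "nat \<Rightarrow> real"
  assumes sorted: "sorted_wrt (\<ge>) L"
    and c01: "\<And>j. j < length L \<Longrightarrow> 0 \<le> c j \<and> c j \<le> 1"
    and csum: "(\<Sum>j<length L. c j) = real k" and "k \<le> length L"
  shows "(\<Sum>j<length L. L ! j * c j) \<le> sum_list (take k L)"
proof -
  define N where "N = length L"
  define t where "t = L ! (k - 1)"
  have desc: "L ! j \<le> L ! i" if "i \<le> j" "j < N" for i j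
    using sorted_wrt_nth_less[OF sorted, of i j] that by (cases "i = j") (auto simp: N_def)
  have split: "(\<Sum>j<N. g j) = (\<Sum>j<k. g j) + (\<Sum>j\<in>{k..<N}. g j)" for g :: "nat \<Rightarrow> real"
    using sum.atLeastLessThan_concat[of 0 k N g] \<open>k \<le> length L\<close> by (simp add: N_def atLeast0LessThan)
  have tail: "(\<Sum>j\<in>{k..<N}. c j) = (\<Sum>j<k. 1 - c j)"
    using split[of c] csum by (simp add: sum_subtractf N_def)
  have "(\<Sum>j<N. L ! j * c j) = (\<Sum>j<k. L ! j * c j) + (\<Sum>j\<in>{k..<N}. L ! j * c j)"
    by (rule split)
  also have "\<dots> \<le> (\<Sum>j<k. L ! j * c j) + (\<Sum>j\<in>{k..<N}. t * c j)"
    unfolding t_def using desc c01 by (intro add_left_mono sum_mono mult_right_mono) (auto simp: N_def)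
  also have "\<dots> = (\<Sum>j<k. L ! j * c j) + (\<Sum>j<k. t * (1 - c j))"
    by (simp add: tail flip: sum_distrib_left)
  also have "\<dots> \<le> (\<Sum>j<k. L ! j * c j) + (\<Sum>j<k. L ! j * (1 - c j))"
    unfolding t_def using desc c01 \<open>k \<le> length L\<close>
    by (intro add_left_mono sum_mono mult_right_mono) (auto simp: N_def)
  also have "\<dots> = (\<Sum>j<k. L ! j)"
    by (simp add: algebra_simps flip: sum.distrib)
  also have "\<dots> = sum_list (take k L)"
    using \<open>k \<le> length L\<close> by (simp add: sum_list_sum_nth atLeast0LessThan min_absorb2)
  finally show ?thesis by (simp add: N_def)
qed

lemma ky_fan_lower_bound:
  fixes A :: "real mat" and x :: "'j \<Rightarrow> nat \<Rightarrow> real"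
  assumes A: "A \<in> carrier_mat n n" "transpose_mat A = A"
    and J: "finite J" "card J \<le> n"
    and orthonormal: "\<And>j l. j \<in> J \<Longrightarrow> l \<in> J \<Longrightarrow> (\<Sum>a<n. x j a * x l a) = (if j = l then 1 else 0)"
  shows "(\<Sum>j\<in>J. \<Sum>a<n. \<Sum>b<n. x j a * A $$ (a,b) * x j b) \<le> S_k (card J) A"
proof -
  obtain P f where
    cols: "\<And>i j. i < n \<Longrightarrow> j < n \<Longrightarrow> (\<Sum>a<n. P $$ (a,i) * P $$ (a,j)) = (if i = j then 1 else 0)" and
    rows: "\<And>a b. a < n \<Longrightarrow> b < n \<Longrightarrow> (\<Sum>i<n. P $$ (a,i) * P $$ (b,i)) = (if a = b then 1 else 0)" and
    decomp: "\<And>a b. a < n \<Longrightarrow> b < n \<Longrightarrow> A $$ (a,b) = (\<Sum>i<n. f i * P $$ (a,i) * P $$ (b,i))" and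
    ev: "eigenvalues_desc A = rev (sort (map f [0..<n]))"
    using symmetric_real_mat_spectral_decomposition[OF A] by blast
  define y where "y j i = (\<Sum>a<n. P $$ (a,i) * x j a)" for j i
  \<comment> \<open>c i is the squared length of the projection of the i-th eigenvector onto the span of the x j.\<close>
  define c where "c i = (\<Sum>j\<in>J. (y j i)\<^sup>2)" for i
  have "(\<Sum>a<n. \<Sum>b<n. x j a * A $$ (a,b) * x j b) = (\<Sum>i<n. f i * (y j i)\<^sup>2)" for j
  proof -
    have "(\<Sum>a<n. \<Sum>b<n. x j a * A $$ (a,b) * x j b)
        = (\<Sum>a<n. \<Sum>b<n. x j a * x j b * (\<Sum>i<n. f i * P $$ (a,i) * P $$ (b,i)))"
      by (intro sum.cong refl) (simp add: decomp mult_ac)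
    then show ?thesis
      using sum_weighted_squares_expand[where w=f and K="{..<n}" and c="\<lambda>i a. P $$ (a,i)" and A="{..<n}"]
      by (simp add: y_def)
  qed
  then have quad: "(\<Sum>j\<in>J. \<Sum>a<n. \<Sum>b<n. x j a * A $$ (a,b) * x j b) = (\<Sum>i<n. f i * c i)"
    by (simp add: c_def sum_distrib_left) (rule sum.swap)
  have c01: "0 \<le> c i \<and> c i \<le> 1" if "i < n" for i
  proof
    show "0 \<le> c i" by (simp add: c_def sum_nonneg)
    have "c i \<le> (\<Sum>a<n. (P $$ (a,i))\<^sup>2)"
      unfolding c_def y_def by (rule bessel_inequality[OF J(1) orthonormal])
    also have "\<dots> = 1" using cols[OF that that] by (simp add: power2_eq_square)
    finally show "c i \<le> 1" .
  qed
  have "(\<Sum>i<n. c i) = (\<Sum>j\<in>J. \<Sum>i<n. (y j i)\<^sup>2)"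
    unfolding c_def by (rule sum.swap)
  also have "\<dots> = (\<Sum>j\<in>J. \<Sum>a<n. (x j a)\<^sup>2)"
    unfolding y_def by (simp add: sum_square_orthogonal_coordinates[OF rows])
  also have "\<dots> = real (card J)"
    using orthonormal by (simp add: power2_eq_square)
  finally have csum: "(\<Sum>i<n. c i) = real (card J)" .
  define L where "L = eigenvalues_desc A"
  have "mset L = mset (map f [0..<n])" by (simp add: L_def ev)
  then obtain p where p: "p permutes {..<n}" and L: "permute_list p (map f [0..<n]) = L"
    by (metis mset_eq_permutation length_map length_upt minus_nat.diff_0)
  have lenL: "length L = n" using L by auto
  have L_nth: "L ! j = f (p j)" if "j < n" for j
    using permute_list_nth[of p "map f [0..<n]" j] p L that permutes_in_image[OF p, of j] by auto
  have "(\<Sum>i<n. f i * c i) = (\<Sum>j<n. L ! j * c (p j))"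
    using sum.permute[OF p, of "\<lambda>i. f i * c i"] L_nth by simp
  also have "\<dots> \<le> sum_list (take (card J) L)"
  proof (rule weighted_sum_le_sum_take[where L=L and c="c \<circ> p", unfolded lenL comp_def])
    show "sorted_wrt (\<ge>) L" by (simp add: L_def ev sorted_wrt_rev)
    show "0 \<le> c (p j) \<and> c (p j) \<le> 1" if "j < n" for j
      using c01 permutes_in_image[OF p, of j] that by simp
    show "(\<Sum>j<n. c (p j)) = real (card J)"
      using sum.permute[OF p, of c] csum by simp
  qed (use J in simp)
  finally show ?thesis by (simp add: quad S_k_def L_def)
qed

definition normalised_indicator :: "nat set \<Rightarrow> nat \<Rightarrow> real" where
  "normalised_indicator X a = (if a \<in> X then 1 / sqrt (real (card X)) else 0)"

lemma sum_normalised_indicator_mult: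
  assumes "X \<subseteq> {..<n}"
  shows "(\<Sum>a<n. normalised_indicator X a * g a) = (\<Sum>a\<in>X. g a) / sqrt (real (card X))"
proof -
  have "(\<Sum>a<n. normalised_indicator X a * g a) = (\<Sum>a<n. if a \<in> X then g a / sqrt (real (card X)) else 0)"
    by (intro sum.cong) (auto simp: normalised_indicator_def)
  also have "\<dots> = (\<Sum>a\<in>{..<n} \<inter> X. g a / sqrt (real (card X)))"
    by (simp add: sum.inter_restrict)
  also have "{..<n} \<inter> X = X" using assms by blast
  finally show ?thesis by (simp add: sum_divide_distrib)
qed

lemma inner_normalised_indicator:
  assumes "X \<subseteq> {..<n}" "Y \<subseteq> {..<n}"
  shows "(\<Sum>a<n. normalised_indicator X a * normalised_indicator Y a)
    = real (card (X \<inter> Y)) / (sqrt (real (card X)) * sqrt (real (card Y)))"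
proof -
  have "finite X" using assms(1) finite_subset by blast
  then have "(\<Sum>a\<in>X. normalised_indicator Y a) = real (card (X \<inter> Y)) / sqrt (real (card Y))"
    by (simp add: normalised_indicator_def sum.If_cases Int_def)
  then show ?thesis by (simp add: sum_normalised_indicator_mult[OF assms(1)])
qed

lemma quadratic_form_normalised_indicator:
  assumes "X \<subseteq> {..<n}"
  shows "(\<Sum>a<n. \<Sum>b<n. normalised_indicator X a * A $$ (a,b) * normalised_indicator X b)
    = (\<Sum>a\<in>X. \<Sum>b\<in>X. A $$ (a,b)) / real (card X)"
proof -
  have "(\<Sum>a<n. \<Sum>b<n. normalised_indicator X a * A $$ (a,b) * normalised_indicator X b)
      = (\<Sum>a<n. normalised_indicator X a * (\<Sum>b<n. normalised_indicator X b * A $$ (a,b)))"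
    by (simp add: sum_distrib_left mult_ac)
  also have "\<dots> = (\<Sum>a\<in>X. \<Sum>b\<in>X. A $$ (a,b)) / (sqrt (real (card X)) * sqrt (real (card X)))"
    by (simp add: sum_normalised_indicator_mult[OF assms] sum_divide_distrib)
  finally show ?thesis by simp
qed

lemma ky_fan_block_averages:
  fixes A :: "real mat" and X :: "'j \<Rightarrow> nat set"
  assumes A: "A \<in> carrier_mat n n" "transpose_mat A = A" and "finite J"
    and X: "\<And>j. j \<in> J \<Longrightarrow> X j \<subseteq> {..<n}" "\<And>j. j \<in> J \<Longrightarrow> X j \<noteq> {}"
    and disjoint: "\<And>j l. j \<in> J \<Longrightarrow> l \<in> J \<Longrightarrow> j \<noteq> l \<Longrightarrow> X j \<inter> X l = {}"
  shows "(\<Sum>j\<in>J. (\<Sum>a\<in>X j. \<Sum>b\<in>X j. A $$ (a,b)) / real (card (X j))) \<le> S_k (card J) A"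
proof -
  have card_pos: "card (X j) > 0" if "j \<in> J" for j
    using X[OF that] finite_subset by (auto simp: card_gt_0_iff)
  have "\<forall>j\<in>J. \<exists>a. a \<in> X j" using X(2) by blast
  then obtain pick where pick: "\<And>j. j \<in> J \<Longrightarrow> pick j \<in> X j" by (metis bchoice)
  have "card J \<le> card {..<n}"
  proof (rule card_inj_on_le)
    show "inj_on pick J"
    proof (rule inj_onI)
      fix j l assume "j \<in> J" "l \<in> J" "pick j = pick l"
      then have "pick j \<in> X j \<inter> X l" using pick[of j] pick[of l] by simp
      then show "j = l" using disjoint \<open>j \<in> J\<close> \<open>l \<in> J\<close> by blast
    qed
    show "pick ` J \<subseteq> {..<n}" using pick X(1) by blast
  qed simp
  then have card_J: "card J \<le> n" by simp
  have orthonormal: "(\<Sum>a<n. normalised_indicator (X j) a * normalised_indicator (X l) a)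
      = (if j = l then 1 else 0)" if "j \<in> J" "l \<in> J" for j l
  proof (cases "j = l")
    case True
    then show ?thesis using card_pos[OF that(1)] by (simp add: inner_normalised_indicator X(1) that)
  next
    case False
    then show ?thesis using disjoint[OF that False] by (simp add: inner_normalised_indicator X(1) that)
  qed
  have "(\<Sum>j\<in>J. \<Sum>a<n. \<Sum>b<n. normalised_indicator (X j) a * A $$ (a,b) * normalised_indicator (X j) b)
      \<le> S_k (card J) A"
    by (rule ky_fan_lower_bound[OF A \<open>finite J\<close> card_J orthonormal])
  then show ?thesis
    using X(1) by (simp add: quadratic_form_normalised_indicator)
qed

lemma S_k_ge_diagonal_plus_block_average:
  fixes A :: "real mat"
  assumes A: "A \<in> carrier_mat n n" "transpose_mat A = A"
    and U: "U \<subseteq> {..<n}" and W: "W \<subseteq> {..<n}" "W \<noteq> {}" and UW: "U \<inter> W = {}"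
  shows "(\<Sum>u\<in>U. A $$ (u,u)) + (\<Sum>a\<in>W. \<Sum>b\<in>W. A $$ (a,b)) / real (card W) \<le> S_k (card U + 1) A"
proof -
  \<comment> \<open>The indices in U as singleton blocks and W as one more block, indexed by nat option.\<close>
  define X where "X j = (case j of Some u \<Rightarrow> {u} | None \<Rightarrow> W)" for j
  have "finite U" using U finite_subset by blast
  have "(\<Sum>j\<in>insert None (Some ` U). (\<Sum>a\<in>X j. \<Sum>b\<in>X j. A $$ (a,b)) / real (card (X j)))
      \<le> S_k (card (insert None (Some ` U))) A"
    using U W UW \<open>finite U\<close> by (intro ky_fan_block_averages[OF A]) (auto simp: X_def)
  then show ?thesis
    using \<open>finite U\<close> by (simp add: X_def sum.reindex card_image add.commute)
qed

section \<open>The matrix A_alpha of a graph\<close>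

lemma A_alpha_carrier: "A_alpha \<alpha> n E \<in> carrier_mat n n"
  by (simp add: A_alpha_def deg_mat_def adj_mat_def)

lemma A_alpha_index:
  assumes "a < n" "b < n"
  shows "A_alpha \<alpha> n E $$ (a,b)
    = (if a = b then \<alpha> * real (degree n E a) else 0) + (1 - \<alpha>) * (if E a b then 1 else 0)"
  using assms by (simp add: A_alpha_def deg_mat_def adj_mat_def)

lemma transpose_A_alpha:
  assumes "simple_graph n E"
  shows "transpose_mat (A_alpha \<alpha> n E) = A_alpha \<alpha> n E"
  using assms A_alpha_carrier[of \<alpha> n E]
  by (intro eq_matI) (auto simp: A_alpha_index simple_graph_def)

lemma boundary_commute:
  assumes "simple_graph n E"
  shows "boundary n E U W = boundary n E W U"
  using assms unfolding boundary_def simple_graph_def by (blast intro: insert_commute)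

lemma card_boundary_eq_sum:
  assumes "U \<subseteq> {..<n}" "W \<subseteq> {..<n}" "U \<inter> W = {}"
  shows "card (boundary n E U W) = (\<Sum>a\<in>U. card {b \<in> W. E a b})"
proof -
  have fin: "finite U" "finite W" using assms(1,2) by (auto intro: finite_subset)
  have "bij_betw (\<lambda>(a,b). {a,b}) (SIGMA a:U. {b \<in> W. E a b}) (boundary n E U W)"
    unfolding bij_betw_def
  proof
    show "inj_on (\<lambda>(a,b). {a,b}) (SIGMA a:U. {b \<in> W. E a b})"
      using assms(3) by (auto simp: inj_on_def doubleton_eq_iff)
    show "(\<lambda>(a,b). {a,b}) ` (SIGMA a:U. {b \<in> W. E a b}) = boundary n E U W"
      using assms(1,2) unfolding boundary_def by auto
  qed
  then have "card (boundary n E U W) = card (SIGMA a:U. {b \<in> W. E a b})"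
    by (simp add: bij_betw_same_card)
  also have "\<dots> = (\<Sum>a\<in>U. card {b \<in> W. E a b})"
    using fin by (simp add: card_SigmaI)
  finally show ?thesis .
qed

lemma degree_split:
  assumes "U \<inter> W = {}" "U \<union> W = {..<n}"
  shows "degree n E a = card {b \<in> U. E a b} + card {b \<in> W. E a b}"
proof -
  have eq: "{b. b < n \<and> E a b} = {b \<in> U. E a b} \<union> {b \<in> W. E a b}" using assms(2) by auto
  have "finite U" "finite W" using assms(2) by (metis finite_Un finite_lessThan)+
  then show ?thesis
    unfolding degree_def eq using assms(1) by (intro card_Un_disjoint) auto
qed

text \<open>Each edge {a, b} with a < b accounts for the two darts (a, b) and (b, a).\<close>
lemma twice_card_edges:
  assumes "simple_graph n E"
  shows "2 * card (edges n E) = (\<Sum>a<n. degree n E a)"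
proof -
  have sym: "E a b \<Longrightarrow> E b a" and irr: "\<not> E a a" for a b
    using assms unfolding simple_graph_def by blast+
  define D where "D = (SIGMA a:{..<n}. {b. b < n \<and> E a b})"
  define D1 where "D1 = {(a,b) \<in> D. a < b}"
  define D2 where "D2 = {(a,b) \<in> D. b < a}"
  have D12: "D = D1 \<union> D2" using irr by (auto simp: D_def D1_def D2_def) (metis linorder_neqE_nat)
  have "finite D" by (simp add: D_def)
  then have "finite D1" "finite D2" by (auto simp: D1_def D2_def intro: rev_finite_subset[of D])
  then have "card D = card D1 + card D2"
    unfolding D12 by (rule card_Un_disjoint) (auto simp: D1_def D2_def)
  moreover have "card D1 = card D2"
    by (rule bij_betw_same_card[of "\<lambda>(a,b). (b,a)"], rule bij_betwI[where g = "\<lambda>(a,b). (b,a)"])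
      (auto simp: D_def D1_def D2_def sym)
  moreover have "card D1 = card (edges n E)"
  proof (rule bij_betw_same_card[of "\<lambda>(a,b). {a,b}"], rule bij_betw_imageI)
    show "inj_on (\<lambda>(a,b). {a,b}) D1" by (auto simp: inj_on_def D1_def doubleton_eq_iff)
    show "(\<lambda>(a,b). {a,b}) ` D1 = edges n E"
    proof
      show "(\<lambda>(a,b). {a,b}) ` D1 \<subseteq> edges n E" by (auto simp: D_def D1_def edges_def)
      show "edges n E \<subseteq> (\<lambda>(a,b). {a,b}) ` D1"
      proof
        fix e assume "e \<in> edges n E"
        then obtain u v where e: "e = {u,v}" "u < n" "v < n" "E u v" unfolding edges_def by auto
        moreover have "u \<noteq> v" using e(4) irr by blast
        ultimately have "(min u v, max u v) \<in> D1" using sym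
          by (auto simp: D_def D1_def min_def max_def)
        moreover have "e = (\<lambda>(a,b). {a,b}) (min u v, max u v)"
          using e(1) by (auto simp: min_def max_def)
        ultimately show "e \<in> (\<lambda>(a,b). {a,b}) ` D1" by blast
      qed
    qed
  qed
  moreover have "card D = (\<Sum>a<n. degree n E a)"
    by (simp add: D_def card_SigmaI degree_def)
  ultimately show ?thesis by simp
qed

lemma sum_A_alpha_block:
  assumes G: "simple_graph n E" and W: "W \<subseteq> {..<n}"
  shows "(\<Sum>a\<in>W. \<Sum>b\<in>W. A_alpha \<alpha> n E $$ (a,b))
    = (\<Sum>a\<in>W. real (degree n E a)) - (1 - \<alpha>) * real (card (boundary n E W ({..<n} - W)))"
proof -
  have fin: "finite W" using W finite_subset by auto
  have row: "(\<Sum>b\<in>W. A_alpha \<alpha> n E $$ (a,b))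
      = real (degree n E a) - (1 - \<alpha>) * real (card {b \<in> {..<n} - W. E a b})" if "a \<in> W" for a
  proof -
    have "(\<Sum>b\<in>W. A_alpha \<alpha> n E $$ (a,b))
        = (\<Sum>b\<in>W. (if a = b then \<alpha> * real (degree n E a) else 0) + (1 - \<alpha>) * (if E a b then 1 else 0))"
      using that W by (intro sum.cong refl) (auto simp: A_alpha_index subset_iff)
    also have "(\<Sum>b\<in>W. if E a b then 1 else 0) = real (card {b \<in> W. E a b})"
      using sum_of_bool_eq[OF fin, of "E a"] fin by (simp add: of_bool_def Int_def)
    then have "(\<Sum>b\<in>W. (if a = b then \<alpha> * real (degree n E a) else 0) + (1 - \<alpha>) * (if E a b then 1 else 0))
        = \<alpha> * real (degree n E a) + (1 - \<alpha>) * real (card {b \<in> W. E a b})"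
      using that fin by (simp add: sum.distrib flip: sum_distrib_left)
    moreover have "degree n E a = card {b \<in> W. E a b} + card {b \<in> {..<n} - W. E a b}"
      by (rule degree_split) (use W in auto)
    ultimately show ?thesis by (simp add: algebra_simps)
  qed
  have "card (boundary n E W ({..<n} - W)) = (\<Sum>a\<in>W. card {b \<in> {..<n} - W. E a b})"
    by (rule card_boundary_eq_sum) (use W in auto)
  then show ?thesis
    by (simp add: row sum_subtractf sum_distrib_left)
qed

lemma A_alpha_diagonal_plus_block_average:
  assumes G: "simple_graph n E" and U: "U \<subseteq> {..<n}"
  defines "W \<equiv> {..<n} - U"
  shows "(\<Sum>u\<in>U. A_alpha \<alpha> n E $$ (u,u)) + (\<Sum>a\<in>W. \<Sum>b\<in>W. A_alpha \<alpha> n E $$ (a,b)) / real (card W)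
    = (\<alpha> - 1 / real (card W)) * (\<Sum>u\<in>U. real (degree n E u))
      + (2 * real (card (edges n E)) - (1 - \<alpha>) * real (card (boundary n E U W))) / real (card W)"
proof -
  define SU where "SU = (\<Sum>u\<in>U. real (degree n E u))"
  define SW where "SW = (\<Sum>a\<in>W. real (degree n E a))"
  define B where "B = real (card (boundary n E U W))"
  have "finite U" using U by (rule finite_subset) simp
  have W: "W \<subseteq> {..<n}" "U \<inter> W = {}" "U \<union> W = {..<n}" "{..<n} - W = U"
    using U by (auto simp: W_def)
  have diag: "(\<Sum>u\<in>U. A_alpha \<alpha> n E $$ (u,u)) = \<alpha> * SU"
    using U G by (auto simp: SU_def A_alpha_index simple_graph_def sum_distrib_left intro!: sum.cong)
  have block: "(\<Sum>a\<in>W. \<Sum>b\<in>W. A_alpha \<alpha> n E $$ (a,b)) = SW - (1 - \<alpha>) * B"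
    using sum_A_alpha_block[OF G W(1), of \<alpha>] boundary_commute[OF G, of W U] W(4)
    by (simp add: SW_def B_def)
  have "2 * real (card (edges n E)) = (\<Sum>a<n. real (degree n E a))"
    using arg_cong[OF twice_card_edges[OF G], of real] by simp
  also have "\<dots> = SU + SW"
    unfolding SU_def SW_def W(3)[symmetric] using W(1,2) \<open>finite U\<close>
    by (metis finite_lessThan finite_subset sum.union_disjoint)
  finally have handshake: "2 * real (card (edges n E)) = SU + SW" .
  show ?thesis
    unfolding diag block handshake SU_def[symmetric] B_def[symmetric]
    by (simp add: add_divide_distrib diff_divide_distrib algebra_simps)
qed

theorem theorem5p4:
  fixes \<alpha> :: real and n k :: nat and E :: "nat \<Rightarrow> nat \<Rightarrow> bool" and U :: "nat set"
  assumes "0 \<le> \<alpha>" and "\<alpha> < 1"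
    and "simple_graph n E" and "connected_graph n E"
    and "1 \<le> k" and "k \<le> n"
    and "U \<subseteq> {0..<n}" and "card U = k - 1"
  shows "S_k k (A_alpha \<alpha> n E) \<ge>
     (\<alpha> - 1 / real (n - k + 1)) * (\<Sum>u\<in>U. real (degree n E u))
     + (2 * real (card (edges n E)) - (1 - \<alpha>) * real (card (boundary n E U ({0..<n} - U))))
       / real (n - k + 1)"
proof -
  note G = \<open>simple_graph n E\<close>
  define W where "W = {..<n} - U"
  have U: "U \<subseteq> {..<n}" using \<open>U \<subseteq> {0..<n}\<close> by auto
  then have "finite U" by (rule finite_subset) simp
  have card_W: "card W = n - k + 1"
    using U \<open>finite U\<close> \<open>card U = k - 1\<close> \<open>1 \<le> k\<close> \<open>k \<le> n\<close> by (simp add: W_def card_Diff_subset)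
  then have "W \<noteq> {}" by (intro notI) simp
  then have W: "W \<subseteq> {..<n}" "W \<noteq> {}" "U \<inter> W = {}" by (auto simp: W_def)
  from S_k_ge_diagonal_plus_block_average[OF A_alpha_carrier transpose_A_alpha[OF G] U W, of \<alpha>]
  have "(\<Sum>u\<in>U. A_alpha \<alpha> n E $$ (u,u)) + (\<Sum>a\<in>W. \<Sum>b\<in>W. A_alpha \<alpha> n E $$ (a,b)) / real (card W)
      \<le> S_k k (A_alpha \<alpha> n E)"
    using \<open>card U = k - 1\<close> \<open>1 \<le> k\<close> by simp
  then show ?thesis
    unfolding A_alpha_diagonal_plus_block_average[OF G U, of \<alpha>, folded W_def]
    using card_W by (simp add: W_def atLeast0LessThan)
qed

end
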